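(* Let $m,n\in\mathbb N$, $p\in(0,1)$, $\pi\in(0,1/2)$, and let $R\in\mathbb F_2^{m\times n}$ be a random matrix with mutually independent columns, each column being zero with probability $1-p$ and otherwise consisting of i.i.d. $\mathrm{Bern}(\pi)$ entries. For $1\le k\le n$ let $x_k\in\mathbb F_2^n$ have exactly $k$ ones. Then $$\mathbb P(Rx_k=0)\le 2^{-m}\Bigl[1+\exp(-kp\pi)+2\exp\Bigl(-\tfrac kmD\bigl(\tfrac p2;p\bigr)\Bigr)\Bigr]^m.$$ In addition, $$\mathbb P(Rx_k=0)\le e^{-kmp\pi/4}\quad\text{for all } 1\le k\le k^*,$$ where $k^*=\max\bigl\{k:\ (1-2\pi)^k\ge\tfrac12\text{ and }\bigl(1-\tfrac{\pi k}{2}\bigr)^m\ge\tfrac12\bigr\}$.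
   Context: $D(q;p)=q\log\frac qp+(1-q)\log\frac{1-q}{1-p}$ is the Kullback–Leibler divergence of $\mathrm{Bern}(q)$ from $\mathrm{Bern}(p)$. Arithmetic in $Rx_k$ is over $\mathbb F_2$. *)

theory Defs
  imports "HOL-Probability.Probability"
begin

definition KL :: "real \<Rightarrow> real \<Rightarrow> real" where
  "KL q p = q * ln (q / p) + (1 - q) * ln ((1 - q) / (1 - p))"

definition col_pmf :: "nat \<Rightarrow> real \<Rightarrow> real \<Rightarrow> (nat \<Rightarrow> bool) pmf" where
  "col_pmf m p ppi =
     bind_pmf (bernoulli_pmf p)
       (\<lambda>b. if b then Pi_pmf {..<m} False (\<lambda>_. bernoulli_pmf ppi)
            else return_pmf (\<lambda>_. False))"

text \<open>Random matrix R in F_2^{m x n}: R j i is the entry in row i, column j;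
  the n columns are mutually independent with distribution col_pmf.\<close>
definition mat_pmf :: "nat \<Rightarrow> nat \<Rightarrow> real \<Rightarrow> real \<Rightarrow> (nat \<Rightarrow> nat \<Rightarrow> bool) pmf" where
  "mat_pmf m n p ppi = Pi_pmf {..<n} (\<lambda>_. False) (\<lambda>_. col_pmf m p ppi)"

definition mat_vec_zero :: "nat \<Rightarrow> nat \<Rightarrow> (nat \<Rightarrow> nat \<Rightarrow> bool) \<Rightarrow> (nat \<Rightarrow> bool) \<Rightarrow> bool" where
  "mat_vec_zero m n R x \<longleftrightarrow> (\<forall>i<m. even (card {j. j < n \<and> R j i \<and> x j}))"

definition kstar :: "nat \<Rightarrow> real \<Rightarrow> nat" where
  "kstar m ppi = Max {k::nat. (1 - 2 * ppi) ^ k \<ge> 1/2 \<and> (1 - ppi * real k / 2) ^ m \<ge> 1/2}"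

end

theory Submission
  imports Defs
begin

text \<open>Writing the indicator of R x = 0 as the product over the rows i of
  (1 + (-1)^((R x)_i)) / 2 and expanding gives
  P(R x = 0) = 2^(-m) * sum over row sets U of E[(-1)^(sum_(i in U) (R x)_i)].
  Independence of the columns makes each term a k-th power
  (1 - p + p (1 - 2 pi)^|U|)^k, and the binomial theorem turns the sum into
  P(R x = 0) = E[((1 + (1 - 2 pi)^A) / 2)^m] with A ~ Bin(k, p), the number of
  nonzero columns in the support of x.
  For the first bound split on A >= k p / 2, where (1 - 2 pi)^A <= exp(-k p pi),
  and on A < k p / 2, a lower tail of probability at most exp(-k D(p/2; p)) by
  Chernoff; then use a^m + b^m <= (a + b)^m.
  For the second bound, (1 - 2 pi)^A >= 1/2 gives (1 + (1 - 2 pi)^A) / 2 <= exp(-pi A / 2),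
  so P(R x = 0) is at most the moment generating function
  (1 - p + p exp(-pi m / 2))^k of A, and (1 - pi/2)^m >= 1/2 makes
  exp(-pi m / 2) <= 1 - pi m / 4.\<close>

lemma expectation_bind_pmf_bounded:
  fixes f :: "'b \<Rightarrow> real"
  assumes "\<And>x. \<bar>f x\<bar> \<le> B"
  shows "measure_pmf.expectation (bind_pmf M N) f =
         measure_pmf.expectation M (\<lambda>x. measure_pmf.expectation (N x) f)"
  unfolding measure_pmf_bind
  using measurable_measure_pmf[of N]
  by (intro integral_bind[where K="count_space UNIV" and B=B and B'=1])
     (auto simp: assms measure_pmf.emeasure_space_1)

lemma expectation_prod_Pi_pmf_subset:
  fixes f :: "'a \<Rightarrow> 'b \<Rightarrow> real"
  assumes A: "finite A" and J: "J \<subseteq> A" and bounded: "\<And>j y. \<bar>f j y\<bar> \<le> B"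
  shows "measure_pmf.expectation (Pi_pmf A d P) (\<lambda>y. \<Prod>j\<in>J. f j (y j)) =
         (\<Prod>j\<in>J. measure_pmf.expectation (P j) (f j))"
proof -
  have "prob_space.indep_vars (Pi_pmf A d P) (\<lambda>_. count_space UNIV) (\<lambda>j y. y j) J"
    using prob_space.indep_vars_subset[OF prob_space_measure_pmf indep_vars_Pi_pmf[OF A] J] .
  then have indep: "prob_space.indep_vars (Pi_pmf A d P) (\<lambda>_. borel) (\<lambda>j y. f j (y j)) J"
    by (rule prob_space.indep_vars_compose2[OF prob_space_measure_pmf]) auto
  have "integrable (measure_pmf (Pi_pmf A d P)) (\<lambda>y. f j (y j))" for j
    by (intro measure_pmf.integrable_const_bound[where B=B]) (auto simp: bounded)
  then have "measure_pmf.expectation (Pi_pmf A d P) (\<lambda>y. \<Prod>j\<in>J. f j (y j)) =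
             (\<Prod>j\<in>J. measure_pmf.expectation (Pi_pmf A d P) (\<lambda>y. f j (y j)))"
    using prob_space.indep_vars_lebesgue_integral[OF prob_space_measure_pmf finite_subset[OF J A] indep]
    by blast
  also have "\<dots> = (\<Prod>j\<in>J. measure_pmf.expectation (map_pmf (\<lambda>y. y j) (Pi_pmf A d P)) (f j))"
    by simp
  also have "\<dots> = (\<Prod>j\<in>J. measure_pmf.expectation (P j) (f j))"
    using J by (intro prod.cong refl) (auto simp: Pi_pmf_component[OF A])
  finally show ?thesis .
qed

definition bool_sign :: "bool \<Rightarrow> real" where
  "bool_sign b = (if b then -1 else 1)"

lemma abs_bool_sign [simp]: "\<bar>bool_sign b\<bar> = 1"
  by (simp add: bool_sign_def)

lemma abs_prod_bool_sign [simp]: "\<bar>\<Prod>i\<in>U. bool_sign (b i)\<bar> = 1"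
  by (simp add: abs_prod)

lemma prod_bool_sign:
  assumes "finite S"
  shows "(\<Prod>j\<in>S. bool_sign (P j)) = (-1) ^ card {j\<in>S. P j}"
proof -
  have "(\<Prod>j\<in>S. bool_sign (P j)) = (\<Prod>j\<in>S \<inter> {j. P j}. -1) * (\<Prod>j\<in>S \<inter> - {j. P j}. 1)"
    unfolding bool_sign_def using prod.If_cases[OF assms, of P "\<lambda>_. -1::real" "\<lambda>_. 1"] by simp
  then show ?thesis
    by (simp add: Int_def conj_commute)
qed

lemma of_bool_all_lessThan: "of_bool (\<forall>i<m. Q i) = (\<Prod>i<(m::nat). of_bool (Q i) :: real)"
  by (induction m) (auto simp: less_Suc_eq)

lemma expectation_col_pmf_prod_bool_sign:
  assumes "U \<subseteq> {..<m}" "0 \<le> p" "p \<le> 1" "0 \<le> ppi" "ppi \<le> 1"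
  shows "measure_pmf.expectation (col_pmf m p ppi) (\<lambda>r. \<Prod>i\<in>U. bool_sign (r i)) =
         1 - p + p * (1 - 2 * ppi) ^ card U"
proof -
  have "measure_pmf.expectation (Pi_pmf {..<m} False (\<lambda>_. bernoulli_pmf ppi))
          (\<lambda>r. \<Prod>i\<in>U. bool_sign (r i)) = (1 - 2 * ppi) ^ card U"
    using assms by (subst expectation_prod_Pi_pmf_subset[where B=1]) (auto simp: bool_sign_def)
  moreover have "\<And>r. \<bar>\<Prod>i\<in>U. bool_sign (r i)\<bar> \<le> 1"
    by simp
  ultimately show ?thesis
    unfolding col_pmf_def using assms
    by (subst expectation_bind_pmf_bounded) (simp_all add: bool_sign_def algebra_simps)
qed

lemma indicator_mat_vec_zero_eq:
  assumes "S = {j. j < n \<and> x j}"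
  shows "indicator {R. mat_vec_zero m n R x} R =
         (1/2) ^ m * (\<Sum>U\<in>Pow {..<m}. \<Prod>i\<in>U. \<Prod>j\<in>S. bool_sign (R j i))"
proof -
  have row: "{j. j < n \<and> R j i \<and> x j} = {j\<in>S. R j i}" for i
    using assms by auto
  have "indicator {R. mat_vec_zero m n R x} R = (\<Prod>i<m. of_bool (even (card {j\<in>S. R j i})) :: real)"
    by (simp add: of_bool_all_lessThan mat_vec_zero_def row indicator_def)
  also have "\<dots> = (\<Prod>i<m. (1/2) * ((\<Prod>j\<in>S. bool_sign (R j i)) + 1))"
    using assms by (intro prod.cong refl) (simp add: prod_bool_sign)
  also have "\<dots> = (1/2) ^ m * (\<Prod>i<m. (\<Prod>j\<in>S. bool_sign (R j i)) + 1)"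
    by (simp only: prod.distrib prod_constant card_lessThan)
  also have "(\<Prod>i<m. (\<Prod>j\<in>S. bool_sign (R j i)) + 1) =
             (\<Sum>U\<in>Pow {..<m}. \<Prod>i\<in>U. \<Prod>j\<in>S. bool_sign (R j i))"
    by (subst prod_add) simp_all
  finally show ?thesis .
qed

lemma prob_mat_vec_zero_eq_Fourier_sum:
  assumes "0 \<le> p" "p \<le> 1" "0 \<le> ppi" "ppi \<le> 1" "card {j. j < n \<and> x j} = k"
  shows "measure_pmf.prob (mat_pmf m n p ppi) {R. mat_vec_zero m n R x} =
         (1/2) ^ m * (\<Sum>U\<in>Pow {..<m}. (1 - p + p * (1 - 2 * ppi) ^ card U) ^ k)"
proof -
  define S where "S = {j. j < n \<and> x j}"
  define M where "M = mat_pmf m n p ppi"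
  define ch where "ch U R = (\<Prod>i\<in>U. \<Prod>j\<in>S. bool_sign (R j i))" for U and R :: "nat \<Rightarrow> nat \<Rightarrow> bool"
  have expectation_ch:
    "measure_pmf.expectation M (ch U) = (1 - p + p * (1 - 2 * ppi) ^ card U) ^ k"
    if "U \<subseteq> {..<m}" for U
  proof -
    have "measure_pmf.expectation M (ch U) =
          measure_pmf.expectation M (\<lambda>R. \<Prod>j\<in>S. \<Prod>i\<in>U. bool_sign (R j i))"
      unfolding ch_def
      by (rule arg_cong[where f="measure_pmf.expectation M"]) (simp add: prod.swap[of _ U])
    also have "\<dots> = (\<Prod>j\<in>S. measure_pmf.expectation (col_pmf m p ppi)
                                (\<lambda>r. \<Prod>i\<in>U. bool_sign (r i)))"
      unfolding M_def mat_pmf_def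
      by (rule expectation_prod_Pi_pmf_subset[where B=1]) (auto simp: S_def)
    also have "\<dots> = (1 - p + p * (1 - 2 * ppi) ^ card U) ^ k"
      using expectation_col_pmf_prod_bool_sign[OF that] assms by (simp add: S_def)
    finally show ?thesis .
  qed
  have integrable: "integrable (measure_pmf M) (ch U)" for U
    by (intro measure_pmf.integrable_const_bound[where B=1]) (auto simp: ch_def abs_prod)
  have "measure_pmf.prob M {R. mat_vec_zero m n R x} =
        measure_pmf.expectation M (indicator {R. mat_vec_zero m n R x})"
    by simp
  also have "\<dots> = measure_pmf.expectation M (\<lambda>R. (1/2) ^ m * (\<Sum>U\<in>Pow {..<m}. ch U R))"
    unfolding ch_def
    by (intro Bochner_Integration.integral_cong refl indicator_mat_vec_zero_eq[OF S_def])
  also have "\<dots> = (1/2) ^ m * (\<Sum>U\<in>Pow {..<m}. measure_pmf.expectation M (ch U))"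
    by (simp add: integrable)
  also have "\<dots> = (1/2) ^ m * (\<Sum>U\<in>Pow {..<m}. (1 - p + p * (1 - 2 * ppi) ^ card U) ^ k)"
    by (simp add: expectation_ch)
  finally show ?thesis
    unfolding M_def .
qed

definition binomial_expectation :: "nat \<Rightarrow> real \<Rightarrow> (nat \<Rightarrow> real) \<Rightarrow> real" where
  "binomial_expectation k p f = (\<Sum>a\<le>k. real (k choose a) * p ^ a * (1 - p) ^ (k - a) * f a)"

lemma binomial_expectation_power:
  "binomial_expectation k p (\<lambda>a. q ^ a) = (p * q + (1 - p)) ^ k"
  unfolding binomial_expectation_def
  by (subst binomial_ring) (simp add: power_mult_distrib mult_ac)

lemma binomial_expectation_cmult:
  "binomial_expectation k p (\<lambda>a. c * f a) = c * binomial_expectation k p f"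
  by (simp add: binomial_expectation_def sum_distrib_left mult_ac)

lemma binomial_expectation_add_const:
  "binomial_expectation k p (\<lambda>a. c + f a) = c + binomial_expectation k p f"
proof -
  have "binomial_expectation k p (\<lambda>_. 1) = 1"
    using binomial_expectation_power[of k p 1] by simp
  then have "binomial_expectation k p (\<lambda>_. c) = c"
    using binomial_expectation_cmult[of k p c "\<lambda>_. 1"] by simp
  then show ?thesis
    by (simp add: binomial_expectation_def distrib_left sum.distrib)
qed

lemma binomial_expectation_mono:
  assumes "0 \<le> p" "p \<le> 1" "\<And>a. a \<le> k \<Longrightarrow> f a \<le> g a"
  shows "binomial_expectation k p f \<le> binomial_expectation k p g"
  unfolding binomial_expectation_def using assms
  by (intro sum_mono mult_left_mono) auto

lemma sum_Pow_power_card: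
  fixes y :: real
  assumes "finite A"
  shows "(\<Sum>U\<in>Pow A. y ^ card U) = (1 + y) ^ card A"
  using prod_add[OF assms, of "\<lambda>_. y" "\<lambda>_. 1"] by (simp add: add.commute)

lemma Fourier_sum_eq_binomial_expectation:
  fixes p c :: real
  shows "(1/2) ^ m * (\<Sum>U\<in>Pow {..<m}. (1 - p + p * c ^ card U) ^ k) =
         binomial_expectation k p (\<lambda>a. ((1 + c ^ a) / 2) ^ m)"
proof -
  have "(\<Sum>U\<in>Pow {..<m}. (1 - p + p * c ^ card U) ^ k) =
        (\<Sum>U\<in>Pow {..<m}. binomial_expectation k p (\<lambda>a. (c ^ card U) ^ a))"
    by (simp add: binomial_expectation_power algebra_simps)
  also have "\<dots> = binomial_expectation k p (\<lambda>a. \<Sum>U\<in>Pow {..<m}. (c ^ a) ^ card U)"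
    unfolding binomial_expectation_def
    by (subst sum.swap) (simp add: sum_distrib_left sum_distrib_right power_mult[symmetric] mult.commute)
  also have "\<dots> = binomial_expectation k p (\<lambda>a. (1 + c ^ a) ^ m)"
    by (simp add: sum_Pow_power_card)
  finally show ?thesis
    by (simp add: binomial_expectation_cmult[symmetric] power_divide)
qed

lemma prob_mat_vec_zero_eq_binomial_expectation:
  assumes "0 \<le> p" "p \<le> 1" "0 \<le> ppi" "ppi \<le> 1" "card {j. j < n \<and> x j} = k"
  shows "measure_pmf.prob (mat_pmf m n p ppi) {R. mat_vec_zero m n R x} =
         binomial_expectation k p (\<lambda>a. ((1 + (1 - 2 * ppi) ^ a) / 2) ^ m)"
  using prob_mat_vec_zero_eq_Fourier_sum[OF assms] Fourier_sum_eq_binomial_expectation by simp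

lemma power_one_minus_mult_one_plus_le_1:
  fixes t :: real
  assumes "0 \<le> t" "t \<le> 1"
  shows "(1 - t) ^ a * (1 + t * real a) \<le> 1"
proof -
  have "(1 - t) ^ a * (1 + t * real a) \<le> (1 - t) ^ a * (1 + t) ^ a"
    using Bernoulli_inequality[of t a] assms by (intro mult_left_mono) (auto simp: mult.commute)
  also have "\<dots> = (1 - t\<^sup>2) ^ a"
    by (simp add: power_mult_distrib[symmetric] algebra_simps power2_eq_square)
  also have "\<dots> \<le> 1"
    using assms by (intro power_le_one) (auto simp: power_le_one)
  finally show ?thesis .
qed

lemma le_one_minus_half_if_mult_one_plus_le_1:
  fixes u y :: real
  assumes "0 \<le> u" "1/2 \<le> y" "y * (1 + u) \<le> 1"
  shows "y \<le> 1 - u / 2"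
proof -
  have "u / 2 \<le> y * u"
    using mult_right_mono[OF assms(2,1)] by simp
  with assms(3) show ?thesis
    by (simp add: algebra_simps)
qed

lemma half_one_plus_power_le_exp:
  fixes ppi :: real
  assumes "0 \<le> ppi" "ppi \<le> 1/2" "1/2 \<le> (1 - 2 * ppi) ^ a"
  shows "(1 + (1 - 2 * ppi) ^ a) / 2 \<le> exp (- ppi * real a / 2)"
proof -
  have "(1 - 2 * ppi) ^ a \<le> 1 - ppi * real a"
    using le_one_minus_half_if_mult_one_plus_le_1[of "2 * ppi * real a"]
          power_one_minus_mult_one_plus_le_1[of "2 * ppi" a] assms
    by simp
  then have "(1 + (1 - 2 * ppi) ^ a) / 2 \<le> 1 + (- ppi * real a / 2)"
    by simp
  also have "\<dots> \<le> exp (- ppi * real a / 2)"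
    by (rule exp_ge_add_one_self)
  finally show ?thesis .
qed

lemma KL_half_eq:
  assumes "0 < p" "p < 1"
  shows "KL (p / 2) p = (1 - p / 2) * ln ((2 - p) / (1 - p)) - ln 2"
proof -
  have "ln ((p / 2) / p) = - ln 2"
    using assms by (simp add: ln_divide_pos)
  moreover have "(1 - p / 2) / (1 - p) = ((2 - p) / (1 - p)) / 2"
    by (simp add: field_simps)
  moreover have "ln (((2 - p) / (1 - p)) / 2) = ln ((2 - p) / (1 - p)) - ln 2"
    using assms by (intro ln_divide_pos) auto
  ultimately show ?thesis
    by (simp only: KL_def) (simp add: algebra_simps)
qed

lemma binomial_lower_tail_le_exp_KL:
  fixes p :: real
  assumes p: "0 < p" "p < 1"
  shows "binomial_expectation k p (\<lambda>a. of_bool (2 * real a < real k * p))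
         \<le> exp (- real k * KL (p / 2) p)"
proof -
  define l where "l = ln ((2 - p) / (1 - p))"
  define r where "r = exp (- l)"
  have "l > 0"
    using p by (simp add: l_def)
  have r: "r = (1 - p) / (2 - p)"
    using p by (simp add: r_def l_def exp_minus)
  have "of_bool (2 * real a < real k * p) \<le> exp (l * real k * p / 2) * r ^ a" for a
  proof (cases "2 * real a < real k * p")
    case True
    have "exp (l * real k * p / 2) * r ^ a = exp (l * (real k * p / 2 - real a))"
      by (simp add: r_def exp_of_nat_mult[symmetric] exp_add[symmetric] algebra_simps)
    also have "\<dots> \<ge> 1"
      using True \<open>l > 0\<close> by simp
    finally show ?thesis
      using True by simp
  qed (simp add: r_def)
  then have "binomial_expectation k p (\<lambda>a. of_bool (2 * real a < real k * p))
             \<le> exp (l * real k * p / 2) * (p * r + (1 - p)) ^ k"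
    using p binomial_expectation_mono[of p k _ "\<lambda>a. exp (l * real k * p / 2) * r ^ a"]
    by (simp add: binomial_expectation_cmult binomial_expectation_power)
  also have "\<dots> = (exp (l * p / 2) * (p * r + (1 - p))) ^ k"
    by (simp add: power_mult_distrib exp_of_nat_mult[symmetric] mult_ac)
  also have "exp (l * p / 2) * (p * r + (1 - p)) = exp (- KL (p / 2) p)"
  proof -
    have "p * r + (1 - p) = 2 * r"
      using p by (simp add: r field_simps)
    then have "exp (l * p / 2) * (p * r + (1 - p)) = exp (ln 2) * exp (l * p / 2) * exp (- l)"
      by (simp add: r_def)
    also have "\<dots> = exp (ln 2 + l * p / 2 - l)"
      by (simp only: diff_conv_add_uminus exp_add)
    also have "ln 2 + l * p / 2 - l = - KL (p / 2) p"
      using p by (simp add: KL_half_eq l_def[symmetric] algebra_simps)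
    finally show ?thesis .
  qed
  also have "exp (- KL (p / 2) p) ^ k = exp (- real k * KL (p / 2) p)"
    by (simp add: exp_of_nat_mult[symmetric])
  finally show ?thesis .
qed

lemma power_add_le_power_of_add:
  fixes x y :: real
  assumes "0 \<le> x" "0 \<le> y" "0 < m"
  shows "x ^ m + y ^ m \<le> (x + y) ^ m"
  using assms(3)
proof (induction m rule: nat_induct_non_zero)
  case (Suc m)
  have "x ^ Suc m + y ^ Suc m \<le> (x + y) * (x ^ m + y ^ m)"
    using assms by (simp add: algebra_simps)
  also have "\<dots> \<le> (x + y) * (x + y) ^ m"
    using Suc assms by (intro mult_left_mono) auto
  finally show ?case
    by simp
qed simp

lemma binomial_expectation_half_one_plus_power_le:
  fixes p ppi :: real
  assumes p: "0 < p" "p < 1" and ppi: "0 < ppi" "ppi < 1/2" and m: "0 < m"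
  shows "binomial_expectation k p (\<lambda>a. ((1 + (1 - 2 * ppi) ^ a) / 2) ^ m)
         \<le> 2 powr (- real m) *
           (1 + exp (- real k * p * ppi) + 2 * exp (- (real k / real m) * KL (p / 2) p)) ^ m"
proof -
  define E where "E = exp (- real k * p * ppi)"
  define Z where "Z = exp (- (real k / real m) * KL (p / 2) p)"
  have split: "((1 + (1 - 2 * ppi) ^ a) / 2) ^ m \<le> ((1 + E) / 2) ^ m + of_bool (2 * real a < real k * p)"
    for a
  proof (cases "2 * real a < real k * p")
    case True
    have "((1 + (1 - 2 * ppi) ^ a) / 2) ^ m \<le> 1"
      using ppi by (intro power_le_one) (auto intro: power_le_one)
    then show ?thesis
      using True by (simp add: E_def add_increasing)
  next
    case False
    have "(1 - 2 * ppi) ^ a \<le> exp (- 2 * ppi) ^ a"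
      using ppi exp_ge_add_one_self[of "- 2 * ppi"] by (intro power_mono) auto
    also have "\<dots> = exp (- (2 * real a) * ppi)"
      by (simp add: exp_of_nat_mult[symmetric] mult_ac)
    also have "\<dots> \<le> E"
      using False ppi by (simp add: E_def mult_right_mono)
    finally show ?thesis
      using False ppi by (simp add: power_mono)
  qed
  have "binomial_expectation k p (\<lambda>a. ((1 + (1 - 2 * ppi) ^ a) / 2) ^ m)
        \<le> ((1 + E) / 2) ^ m + binomial_expectation k p (\<lambda>a. of_bool (2 * real a < real k * p))"
    using p binomial_expectation_mono[OF _ _ split] by (simp add: binomial_expectation_add_const)
  also have "\<dots> \<le> ((1 + E) / 2) ^ m + Z ^ m"
    using binomial_lower_tail_le_exp_KL[OF p] m by (simp add: Z_def exp_of_nat_mult[symmetric])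
  also have "\<dots> = (1/2) ^ m * ((1 + E) ^ m + (2 * Z) ^ m)"
    by (simp add: power_mult_distrib power_divide field_simps)
  also have "\<dots> \<le> (1/2) ^ m * (1 + E + 2 * Z) ^ m"
    by (intro mult_left_mono power_add_le_power_of_add) (auto simp: E_def Z_def m add_increasing)
  also have "(1/2 :: real) ^ m = 2 powr (- real m)"
    by (simp add: powr_minus powr_realpow power_one_over inverse_eq_divide)
  finally show ?thesis
    by (simp add: E_def Z_def)
qed

lemma binomial_expectation_half_one_plus_power_le_exp:
  fixes p ppi :: real
  assumes p: "0 < p" "p < 1" and ppi: "0 < ppi" "ppi < 1/2"
    and k: "1/2 \<le> (1 - 2 * ppi) ^ k" and m: "1/2 \<le> (1 - ppi / 2) ^ m"
  shows "binomial_expectation k p (\<lambda>a. ((1 + (1 - 2 * ppi) ^ a) / 2) ^ m)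
         \<le> exp (- real k * real m * p * ppi / 4)"
proof -
  define t where "t = ppi * real m / 2"
  define q where "q = exp (- t)"
  have "((1 + (1 - 2 * ppi) ^ a) / 2) ^ m \<le> q ^ a" if "a \<le> k" for a
  proof -
    have "(1 - 2 * ppi) ^ k \<le> (1 - 2 * ppi) ^ a"
      using that ppi by (intro power_decreasing) auto
    with k have "1/2 \<le> (1 - 2 * ppi) ^ a"
      by linarith
    then have "((1 + (1 - 2 * ppi) ^ a) / 2) ^ m \<le> exp (- ppi * real a / 2) ^ m"
      using ppi by (intro power_mono half_one_plus_power_le_exp) auto
    also have "\<dots> = q ^ a"
      by (simp add: q_def t_def exp_of_nat_mult[symmetric] mult_ac)
    finally show ?thesis .
  qed
  then have "binomial_expectation k p (\<lambda>a. ((1 + (1 - 2 * ppi) ^ a) / 2) ^ m) \<le> (p * q + (1 - p)) ^ k"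
    using p binomial_expectation_mono[of p k _ "\<lambda>a. q ^ a"] by (simp add: binomial_expectation_power)
  also have "\<dots> \<le> exp (- p * t / 2) ^ k"
  proof (rule power_mono)
    have "1/2 \<le> (1 - ppi / 2) ^ m"
      by (fact m)
    also have "\<dots> \<le> exp (- ppi / 2) ^ m"
      using ppi exp_ge_add_one_self[of "- ppi / 2"] by (intro power_mono) auto
    also have "\<dots> = q"
      by (simp add: q_def t_def exp_of_nat_mult[symmetric] mult_ac)
    finally have "1/2 \<le> q" .
    moreover have "q * (1 + t) \<le> 1"
      using exp_ge_add_one_self[of t] by (simp add: q_def exp_minus field_simps)
    ultimately have "q \<le> 1 - t / 2"
      using ppi by (intro le_one_minus_half_if_mult_one_plus_le_1) (auto simp: t_def)
    then have "p * q + (1 - p) \<le> 1 + (- p * t / 2)"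
      using p mult_left_mono[of q "1 - t / 2" p] by (simp add: algebra_simps)
    also have "\<dots> \<le> exp (- p * t / 2)"
      by (rule exp_ge_add_one_self)
    finally show "p * q + (1 - p) \<le> exp (- p * t / 2)" .
    show "0 \<le> p * q + (1 - p)"
      using p by (simp add: q_def)
  qed
  also have "\<dots> = exp (- real k * real m * p * ppi / 4)"
    by (simp add: t_def exp_of_nat_mult[symmetric] mult_ac)
  finally show ?thesis .
qed

lemma kstar_conditions:
  fixes ppi :: real
  assumes ppi: "0 < ppi" "ppi < 1/2" and k: "1 \<le> k" "k \<le> kstar m ppi"
  shows "1/2 \<le> (1 - 2 * ppi) ^ k" "1/2 \<le> (1 - ppi / 2) ^ m"
proof -
  define A where "A = {k::nat. (1 - 2 * ppi) ^ k \<ge> 1/2 \<and> (1 - ppi * real k / 2) ^ m \<ge> 1/2}"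
  have bound: "2 * ppi * real K \<le> 1" if "1/2 \<le> (1 - 2 * ppi) ^ K" for K
    using le_one_minus_half_if_mult_one_plus_le_1[of "2 * ppi * real K" "(1 - 2 * ppi) ^ K"]
          power_one_minus_mult_one_plus_le_1[of "2 * ppi" K] that ppi
    by (simp add: mult_ac)
  have "A \<subseteq> {..nat \<lceil>1 / (2 * ppi)\<rceil>}"
  proof
    fix K assume "K \<in> A"
    then have "real K \<le> 1 / (2 * ppi)"
      using bound ppi by (simp add: A_def field_simps)
    then have "real K \<le> real (nat \<lceil>1 / (2 * ppi)\<rceil>)"
      using real_nat_ceiling_ge[of "1 / (2 * ppi)"] by linarith
    then show "K \<in> {..nat \<lceil>1 / (2 * ppi)\<rceil>}"
      by simp
  qed
  then have "finite A"
    by (rule finite_subset) simp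
  moreover have "0 \<in> A"
    by (simp add: A_def)
  ultimately have "kstar m ppi \<in> A"
    unfolding kstar_def A_def[symmetric] by (intro Max_in) auto
  then have K1: "1/2 \<le> (1 - 2 * ppi) ^ kstar m ppi"
    and K2: "1/2 \<le> (1 - ppi * real (kstar m ppi) / 2) ^ m"
    by (auto simp: A_def)
  have "(1 - 2 * ppi) ^ kstar m ppi \<le> (1 - 2 * ppi) ^ k"
    using k ppi by (intro power_decreasing) auto
  with K1 show "1/2 \<le> (1 - 2 * ppi) ^ k"
    by linarith
  have "(1 - ppi * real (kstar m ppi) / 2) ^ m \<le> (1 - ppi / 2) ^ m"
    using bound[OF K1] k ppi by (intro power_mono) auto
  with K2 show "1/2 \<le> (1 - ppi / 2) ^ m"
    by linarith
qed

theorem lemma5: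
  fixes m n k :: nat and p ppi :: real and x :: "nat \<Rightarrow> bool"
  assumes "0 < p" "p < 1" "0 < ppi" "ppi < 1/2"
    and "1 \<le> k" "k \<le> n"
    and "card {j. j < n \<and> x j} = k"
  shows "measure_pmf.prob (mat_pmf m n p ppi) {R. mat_vec_zero m n R x}
           \<le> 2 powr (- real m) *
             (1 + exp (- real k * p * ppi)
                + 2 * exp (- (real k / real m) * KL (p / 2) p)) ^ m
         \<and> (k \<le> kstar m ppi \<longrightarrow>
         measure_pmf.prob (mat_pmf m n p ppi) {R. mat_vec_zero m n R x}
           \<le> exp (- real k * real m * p * ppi / 4))"
proof -
  let ?P = "measure_pmf.prob (mat_pmf m n p ppi) {R. mat_vec_zero m n R x}"
  have P: "?P = binomial_expectation k p (\<lambda>a. ((1 + (1 - 2 * ppi) ^ a) / 2) ^ m)"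
    using assms by (intro prob_mat_vec_zero_eq_binomial_expectation) auto
  have "?P \<le> 2 powr (- real m) *
             (1 + exp (- real k * p * ppi) + 2 * exp (- (real k / real m) * KL (p / 2) p)) ^ m"
  proof (cases "m = 0")
    case True
    then show ?thesis
      by (simp add: measure_pmf.prob_le_1)
  next
    case False
    then show ?thesis
      unfolding P using assms by (intro binomial_expectation_half_one_plus_power_le) auto
  qed
  moreover have "?P \<le> exp (- real k * real m * p * ppi / 4)" if "k \<le> kstar m ppi"
    unfolding P using assms kstar_conditions[OF assms(3,4,5) that]
    by (intro binomial_expectation_half_one_plus_power_le_exp) auto
  ultimately show ?thesis
    by blast
qed

end
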